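(* Let $p$ be a prime and $G=Z_{p^{\lambda_1}}\times\cdots\times Z_{p^{\lambda_n}}$ with $\lambda_1\le\cdots\le\lambda_n$. For $\mathbf a\in\Lambda(G)$, the subgroup $R(\mathbf a)$ is a characteristic subgroup of $G$ if and only if $\mathbf a$ is canonical.
   Context: Tuples are ordered componentwise. $\Lambda(G)=\{\mathbf a\in\mathbb Z^n:\mathbf 0\le\mathbf a\le(\lambda_1,\dots,\lambda_n)\}$. For $\mathbf a\in\Lambda(G)$, $T(\mathbf a)$ is the set of $(g_1,\dots,g_n)\in G$ with $|g_i|=p^{a_i}$ for all $i$, and $R(\mathbf a)=\bigcup_{\mathbf b\le\mathbf a}T(\mathbf b)$ (a subgroup of $G$). A tuple $\mathbf a$ is canonical if (I) $a_i\ge a_{i-1}$ for all $i\in\{2,\dots,n\}$ and (II) $a_{i+1}-a_i\le\lambda_{i+1}-\lambda_i$ for all $i\in\{1,\dots,n-1\}$. *)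

theory Defs
  imports "HOL-Algebra.Algebra" "HOL-Algebra.Multiplicative_Group"
begin

definition pgrp :: "nat \<Rightarrow> nat \<Rightarrow> (nat \<Rightarrow> nat) \<Rightarrow> (nat \<Rightarrow> int) monoid" where
  "pgrp p n lam = product_group {1..n} (\<lambda>i. integer_mod_group (p ^ lam i))"

definition Tset :: "nat \<Rightarrow> nat \<Rightarrow> (nat \<Rightarrow> nat) \<Rightarrow> (nat \<Rightarrow> nat) \<Rightarrow> (nat \<Rightarrow> int) set" where
  "Tset p n lam a = {g \<in> carrier (pgrp p n lam).
     \<forall>i\<in>{1..n}. group.ord (integer_mod_group (p ^ lam i)) (g i) = p ^ a i}"

definition Rset :: "nat \<Rightarrow> nat \<Rightarrow> (nat \<Rightarrow> nat) \<Rightarrow> (nat \<Rightarrow> nat) \<Rightarrow> (nat \<Rightarrow> int) set" where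
  "Rset p n lam a = (\<Union>b \<in> {b. \<forall>i\<in>{1..n}. b i \<le> a i}. Tset p n lam b)"

definition characteristic_subgroup :: "'a set \<Rightarrow> ('a, 'b) monoid_scheme \<Rightarrow> bool" where
  "characteristic_subgroup H G \<longleftrightarrow> subgroup H G \<and> (\<forall>\<phi> \<in> iso G G. \<phi> ` H = H)"

definition in_Lambda :: "nat \<Rightarrow> (nat \<Rightarrow> nat) \<Rightarrow> (nat \<Rightarrow> nat) \<Rightarrow> bool" where
  "in_Lambda n lam a \<longleftrightarrow> (\<forall>i\<in>{1..n}. a i \<le> lam i)"

definition canonical :: "nat \<Rightarrow> (nat \<Rightarrow> nat) \<Rightarrow> (nat \<Rightarrow> nat) \<Rightarrow> bool" where
  "canonical n lam a \<longleftrightarrow>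
     (\<forall>i\<in>{2..n}. a (i - 1) \<le> a i) \<and>
     (\<forall>i\<in>{1..<n}. int (a (i + 1)) - int (a i) \<le> int (lam (i + 1)) - int (lam i))"

end

theory Submission
  imports Defs
begin

text \<open>
  R(a) is the product of the cyclic subgroups p^(lam i - a i) Z_{p^lam i}. If a is canonical, the
  image of a generator of the j-th factor under any endomorphism is a p^(lam j - a j)-th power
  annihilated by p^(a j); condition (II) puts its i-th coordinate into the i-th factor for i \<le> j,
  condition (I) for i > j. So every automorphism maps the finite set R(a) injectively into, hence
  onto, itself. If a neighbour condition fails at s and t, the automorphism adding k g_s to the
  t-th coordinate (k = 1 or a power of p) moves the generator of the s-th factor out of R(a).
\<close>

lemma iso_image_eq_of_image_subset:
  assumes "\<phi> \<in> iso G G" "finite H" "H \<subseteq> carrier G" "\<phi> ` H \<subseteq> H"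
  shows "\<phi> ` H = H"
proof -
  have "inj_on \<phi> H"
    using assms(1,3) inj_on_subset by (auto simp: iso_def bij_betw_def)
  then show ?thesis
    using card_subset_eq[OF assms(2,4)] by (simp add: card_image)
qed

lemma mod_mult_mod_of_dvd:
  fixes k u A B :: int
  assumes "B dvd k * A"
  shows "(k * (u mod A)) mod B = (k * u) mod B"
proof -
  have "k * u = k * (u mod A) + (k * A) * (u div A)"
    by (metis div_mult_mod_eq distrib_left mult.assoc mult.commute add.commute)
  moreover have "((k * A) * (u div A)) mod B = 0" using assms by simp
  ultimately show ?thesis by (metis add.right_neutral mod_add_right_eq)
qed

lemma canonical_imp_mono:
  assumes can: "canonical n lam a" and a: "\<forall>i\<in>{1..n}. a i \<le> lam i"
    and ij: "1 \<le> i" "i \<le> j" "j \<le> n"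
  shows "a i \<le> a j" and "lam i - a i \<le> lam j - a j"
proof -
  have ivl: "{i..<j} \<subseteq> {1..<n}" using ij by auto
  have "a k \<le> a (Suc k)" if "k \<in> {1..<n}" for k
  proof -
    have "Suc k \<in> {2..n}" using that by auto
    then have "a (Suc k - 1) \<le> a (Suc k)" using can unfolding canonical_def by blast
    then show ?thesis by simp
  qed
  then show "a i \<le> a j"
    using lift_Suc_mono_le_ivl[OF _ ij(2) ivl] by blast
  have "lam k - a k \<le> lam (Suc k) - a (Suc k)" if "k \<in> {1..<n}" for k
  proof -
    have "int (a (k + 1)) - int (a k) \<le> int (lam (k + 1)) - int (lam k)"
      using can that unfolding canonical_def by blast
    moreover have "a k \<le> lam k" "a (Suc k) \<le> lam (Suc k)" using a that by auto
    ultimately show ?thesis by simp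
  qed
  then show "lam i - a i \<le> lam j - a j"
    using lift_Suc_mono_le_ivl[OF _ ij(2) ivl, of "\<lambda>k. lam k - a k"] by blast
qed

locale prime_power_product =
  fixes p n :: nat and lam :: "nat \<Rightarrow> nat"
  assumes prime: "Factorial_Ring.prime p"
begin

abbreviation "Z i \<equiv> integer_mod_group (p ^ lam i)"
abbreviation "G \<equiv> pgrp p n lam"
abbreviation "M i \<equiv> int p ^ lam i"

lemma p_gt_1: "1 < p"
  using prime prime_gt_1_nat by blast

lemma M_pos: "0 < M i"
  using p_gt_1 by simp

lemma p_power_dvd_iff: "int p ^ k dvd int p ^ l \<longleftrightarrow> k \<le> l"
  using p_gt_1 by (subst dvd_power_iff) auto

lemma carrier_Z: "carrier (Z i) = {0..<M i}"
  using p_gt_1 by (simp add: carrier_integer_mod_group)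

lemma carrier_G: "carrier G = (\<Pi>\<^sub>E i\<in>{1..n}. {0..<M i})"
  by (simp add: pgrp_def carrier_Z)

lemma mult_G: "x \<otimes>\<^bsub>G\<^esub> y = (\<lambda>i\<in>{1..n}. (x i + y i) mod M i)"
  by (simp add: pgrp_def)

lemma one_G: "\<one>\<^bsub>G\<^esub> = (\<lambda>i\<in>{1..n}. 0)"
  by (simp add: pgrp_def)

lemma group_G: "group G"
  by (simp add: pgrp_def)

lemma pow_G: "x [^]\<^bsub>G\<^esub> (k::nat) = (\<lambda>i\<in>{1..n}. (int k * x i) mod M i)"
proof (induction k)
  case 0 then show ?case by (simp add: one_G)
next
  case (Suc k)
  show ?case by (rule ext) (simp add: Suc mult_G mod_add_right_eq distrib_right add.commute)
qed

lemma ord_prime_power_le_iff: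
  assumes x: "x \<in> carrier (Z i)" and b: "b \<le> lam i"
  shows "(\<exists>c\<le>b. group.ord (Z i) x = p ^ c) \<longleftrightarrow> int p ^ (lam i - b) dvd x"
proof -
  interpret Zi: group "Z i" by simp
  have "(\<exists>c\<le>b. Zi.ord x = p ^ c) \<longleftrightarrow> Zi.ord x dvd p ^ b"
    using divides_primepow_nat[OF prime] by blast
  also have "\<dots> \<longleftrightarrow> (int p ^ b * x) mod M i = 0"
    using Zi.pow_eq_id[OF x, of "p ^ b"] by simp
  also have "\<dots> \<longleftrightarrow> int p ^ b * int p ^ (lam i - b) dvd int p ^ b * x"
    using b by (simp add: mod_eq_0_iff_dvd flip: power_add)
  also have "\<dots> \<longleftrightarrow> int p ^ (lam i - b) dvd x"
    using p_gt_1 by simp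
  finally show ?thesis .
qed

definition Rfactor :: "(nat \<Rightarrow> nat) \<Rightarrow> nat \<Rightarrow> int set" where
  "Rfactor a i = {x \<in> {0..<M i}. int p ^ (lam i - a i) dvd x}"

definition Rprod :: "(nat \<Rightarrow> nat) \<Rightarrow> (nat \<Rightarrow> int) set" where
  "Rprod a = (\<Pi>\<^sub>E i\<in>{1..n}. Rfactor a i)"

lemma mem_Rprod_iff:
  "g \<in> Rprod a \<longleftrightarrow> g \<in> carrier G \<and> (\<forall>i\<in>{1..n}. int p ^ (lam i - a i) dvd g i)"
  by (auto simp: Rprod_def Rfactor_def carrier_G PiE_iff)

lemma Rset_eq_Rprod:
  assumes a: "\<forall>i\<in>{1..n}. a i \<le> lam i"
  shows "Rset p n lam a = Rprod a"
proof (rule Set.set_eqI)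
  fix g
  have "g \<in> Rset p n lam a \<longleftrightarrow>
      g \<in> carrier G \<and> (\<forall>i\<in>{1..n}. \<exists>c\<le>a i. group.ord (Z i) (g i) = p ^ c)"
  proof
    assume g: "g \<in> carrier G \<and> (\<forall>i\<in>{1..n}. \<exists>c\<le>a i. group.ord (Z i) (g i) = p ^ c)"
    then obtain b where "\<forall>i\<in>{1..n}. b i \<le> a i \<and> group.ord (Z i) (g i) = p ^ b i"
      by metis
    then show "g \<in> Rset p n lam a"
      using g unfolding Rset_def Tset_def
      by (auto intro!: exI[of _ "\<lambda>i. if i \<in> {1..n} then b i else 0"])
  qed (auto simp: Rset_def Tset_def)
  moreover have "g i \<in> carrier (Z i)" if "g \<in> carrier G" "i \<in> {1..n}" for i
    using that by (auto simp: carrier_G carrier_Z)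
  ultimately show "g \<in> Rset p n lam a \<longleftrightarrow> g \<in> Rprod a"
    using ord_prime_power_le_iff a unfolding mem_Rprod_iff by blast
qed

lemma Rfactor_subgroup: "subgroup (Rfactor a i) (Z i)"
proof -
  interpret Zi: group "Z i" by simp
  have dM: "int p ^ (lam i - a i) dvd M i"
    by (simp add: p_power_dvd_iff)
  show ?thesis
  proof (rule Zi.subgroupI)
    show "Rfactor a i \<subseteq> carrier (Z i)" by (auto simp: Rfactor_def carrier_Z)
    show "Rfactor a i \<noteq> {}" using M_pos[of i] by (auto simp: Rfactor_def intro!: exI[of _ 0])
    show "inv\<^bsub>Z i\<^esub> x \<in> Rfactor a i" if "x \<in> Rfactor a i" for x
      using that dM M_pos[of i] by (auto simp: Rfactor_def carrier_Z dvd_mod)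
    show "x \<otimes>\<^bsub>Z i\<^esub> y \<in> Rfactor a i" if "x \<in> Rfactor a i" "y \<in> Rfactor a i" for x y
      using that dM M_pos[of i] by (auto simp: Rfactor_def dvd_mod)
  qed
qed

lemma Rprod_subgroup: "subgroup (Rprod a) G"
  unfolding pgrp_def Rprod_def
  by (subst PiE_subgroup_product_group) (use Rfactor_subgroup in auto)

lemma finite_Rprod: "finite (Rprod a)"
  unfolding Rprod_def Rfactor_def by (intro finite_PiE finite_Collect_conjI disjI1) auto

definition coord_vec :: "nat \<Rightarrow> int \<Rightarrow> nat \<Rightarrow> int" where
  "coord_vec j v = (\<lambda>i\<in>{1..n}. if i = j then v else 0)"

lemma coord_vec_carrier: "j \<in> {1..n} \<Longrightarrow> v \<in> {0..<M j} \<Longrightarrow> coord_vec j v \<in> carrier G"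
  using M_pos by (auto simp: coord_vec_def carrier_G)

lemma pow_mem_Rprod:
  assumes a: "\<forall>i\<in>{1..n}. a i \<le> lam i" and j: "j \<in> {1..n}"
    and a_mono: "\<And>i. i \<in> {j..n} \<Longrightarrow> a j \<le> a i"
    and co_mono: "\<And>i. i \<in> {1..j} \<Longrightarrow> lam i - a i \<le> lam j - a j"
    and z: "z \<in> carrier G" and y: "y = z [^]\<^bsub>G\<^esub> (p ^ (lam j - a j))"
    and y_one: "y [^]\<^bsub>G\<^esub> (p ^ a j) = \<one>\<^bsub>G\<^esub>"
  shows "y \<in> Rprod a"
proof -
  interpret G: group G by (rule group_G)
  have yc: "y \<in> carrier G"
    using y z by simp
  have "int p ^ (lam i - a i) dvd y i" if i: "i \<in> {1..n}" for i
  proof (cases "i \<le> j")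
    case True
    have "int p ^ (lam i - a i) dvd int p ^ (lam j - a j)" "int p ^ (lam i - a i) dvd M i"
      using co_mono[of i] True i by (auto simp: p_power_dvd_iff)
    moreover have "y i = (int p ^ (lam j - a j) * z i) mod M i"
      using i by (simp add: y pow_G)
    ultimately show ?thesis by (simp add: dvd_mod)
  next
    case False
    then have aji: "a j \<le> a i" and "a i \<le> lam i" using a_mono[of i] a i by auto
    have "(int p ^ a j * y i) mod M i = 0"
      using fun_cong[OF y_one, of i] i by (simp add: pow_G one_G)
    then have "int p ^ a j * int p ^ (lam i - a j) dvd int p ^ a j * y i"
      using aji \<open>a i \<le> lam i\<close> by (simp add: mod_eq_0_iff_dvd flip: power_add)
    then have "int p ^ (lam i - a j) dvd y i"
      using p_gt_1 by simp
    moreover have "int p ^ (lam i - a i) dvd int p ^ (lam i - a j)"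
      using aji by (simp add: p_power_dvd_iff)
    ultimately show ?thesis by (rule dvd_trans[rotated])
  qed
  then show ?thesis
    using yc unfolding mem_Rprod_iff by blast
qed

lemma hom_coord_vec_mem_Rprod:
  assumes a: "\<forall>i\<in>{1..n}. a i \<le> lam i" and j: "j \<in> {1..n}"
    and a_mono: "\<And>i. i \<in> {j..n} \<Longrightarrow> a j \<le> a i"
    and co_mono: "\<And>i. i \<in> {1..j} \<Longrightarrow> lam i - a i \<le> lam j - a j"
    and phi: "\<phi> \<in> hom G G" and v: "v \<in> Rfactor a j"
  shows "\<phi> (coord_vec j v) \<in> Rprod a"
proof -
  define c where "c = lam j - a j"
  obtain w where w: "v = int p ^ c * w" using v by (auto simp: Rfactor_def c_def elim!: dvdE)
  have v_range: "0 \<le> v" "v < M j" using v by (auto simp: Rfactor_def)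
  have pc: "1 \<le> int p ^ c" using p_gt_1 by simp
  then have w_pos: "0 \<le> w" using v_range by (simp add: w zero_le_mult_iff)
  then have "w \<le> v" using mult_right_mono[OF pc] by (simp add: w)
  then have w_carrier: "coord_vec j w \<in> carrier G"
    using coord_vec_carrier[OF j] v_range w_pos by auto
  have v_carrier: "coord_vec j v \<in> carrier G"
    using coord_vec_carrier[OF j] v_range by auto
  have v_pow: "coord_vec j v = coord_vec j w [^]\<^bsub>G\<^esub> (p ^ c)"
    using v_range by (auto simp: pow_G coord_vec_def w)
  have "int p ^ a j * v = M j * w"
    using a j by (simp add: w c_def flip: power_add)
  then have "coord_vec j v [^]\<^bsub>G\<^esub> (p ^ a j) = \<one>\<^bsub>G\<^esub>"
    by (auto simp: pow_G coord_vec_def one_G)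
  then have "\<phi> (coord_vec j v) [^]\<^bsub>G\<^esub> (p ^ a j) = \<one>\<^bsub>G\<^esub>"
    by (metis hom_nat_pow[OF phi v_carrier group_G group_G] hom_one[OF phi group_G group_G])
  moreover have "\<phi> (coord_vec j v) = \<phi> (coord_vec j w) [^]\<^bsub>G\<^esub> (p ^ c)"
    unfolding v_pow using hom_nat_pow[OF phi w_carrier group_G group_G] .
  ultimately show ?thesis
    using pow_mem_Rprod[OF a j a_mono co_mono] phi w_carrier
    by (simp add: c_def hom_in_carrier)
qed

lemma hom_image_Rprod_subset:
  assumes can: "canonical n lam a" and a: "\<forall>i\<in>{1..n}. a i \<le> lam i"
    and phi: "\<phi> \<in> hom G G"
  shows "\<phi> ` Rprod a \<subseteq> Rprod a"
proof (rule image_subsetI)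
  fix g assume "g \<in> Rprod a"
  then have g: "g \<in> carrier G" "\<And>j. j \<in> {1..n} \<Longrightarrow> g j \<in> Rfactor a j"
    using subgroup.subset[OF Rprod_subgroup] by (auto simp: Rprod_def)
  interpret R: subgroup "Rprod a" G by (rule Rprod_subgroup)
  define part where "part J = (\<lambda>i\<in>{1..n}. if i \<in> J then g i else 0)" for J
  have part_carrier: "part J \<in> carrier G" for J
    using g(1) M_pos by (auto simp: part_def carrier_G PiE_iff)
  have "\<phi> (part J) \<in> Rprod a" if "J \<subseteq> {1..n}" for J
    using finite_subset[OF that finite_atLeastAtMost] that
  proof (induction J rule: finite_subset_induct)
    case empty
    have "part {} = \<one>\<^bsub>G\<^esub>" by (simp add: part_def one_G)
    then show ?case using hom_one[OF phi group_G group_G] R.one_closed by simp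
  next
    case (insert j J)
    have split: "part (insert j J) = part J \<otimes>\<^bsub>G\<^esub> coord_vec j (g j)"
      using g(1) insert.hyps p_gt_1 by (auto simp: part_def coord_vec_def mult_G carrier_G PiE_iff)
    have "coord_vec j (g j) \<in> carrier G"
      using g(1) insert.hyps M_pos by (auto simp: coord_vec_def carrier_G PiE_iff)
    moreover have "\<phi> (coord_vec j (g j)) \<in> Rprod a"
      using insert.hyps g(2) canonical_imp_mono[OF can a]
      by (intro hom_coord_vec_mem_Rprod[OF a _ _ _ phi]) auto
    ultimately show ?case
      unfolding split using hom_mult[OF phi part_carrier] insert.IH R.m_closed by simp
  qed
  moreover have "part {1..n} = g"
    using g(1) by (auto simp: part_def carrier_G PiE_iff extensional_def)
  ultimately show "\<phi> g \<in> Rprod a" by (metis order_refl)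
qed

lemma canonical_imp_characteristic:
  assumes "canonical n lam a" and a: "\<forall>i\<in>{1..n}. a i \<le> lam i"
  shows "characteristic_subgroup (Rprod a) G"
proof -
  have "\<phi> ` Rprod a = Rprod a" if "\<phi> \<in> iso G G" for \<phi>
    using iso_image_eq_of_image_subset[OF that finite_Rprod subgroup.subset[OF Rprod_subgroup]]
      hom_image_Rprod_subset[OF assms] that by (simp add: iso_def)
  then show ?thesis
    unfolding characteristic_subgroup_def using Rprod_subgroup by blast
qed

definition transvection :: "nat \<Rightarrow> nat \<Rightarrow> int \<Rightarrow> (nat \<Rightarrow> int) \<Rightarrow> nat \<Rightarrow> int" where
  "transvection s t k g = (\<lambda>i\<in>{1..n}. if i = t then (g t + k * g s) mod M t else g i)"

lemma transvection_carrier: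
  "t \<in> {1..n} \<Longrightarrow> g \<in> carrier G \<Longrightarrow> transvection s t k g \<in> carrier G"
  using M_pos by (auto simp: transvection_def carrier_G PiE_iff)

lemma transvection_hom:
  assumes s: "s \<in> {1..n}" and t: "t \<in> {1..n}" and st: "s \<noteq> t" and k: "M t dvd k * M s"
  shows "transvection s t k \<in> hom G G"
proof (rule homI)
  show "transvection s t k x \<in> carrier G" if "x \<in> carrier G" for x
    using transvection_carrier[OF t that] .
  fix x y
  have "((x t + y t) mod M t + k * ((x s + y s) mod M s)) mod M t
      = ((x t + y t) + k * (x s + y s)) mod M t"
    using mod_mult_mod_of_dvd[OF k, of "x s + y s"] by (metis mod_add_left_eq mod_add_right_eq)
  also have "\<dots> = ((x t + k * x s) mod M t + (y t + k * y s) mod M t) mod M t"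
    by (simp add: mod_add_eq algebra_simps)
  finally show "transvection s t k (x \<otimes>\<^bsub>G\<^esub> y) = transvection s t k x \<otimes>\<^bsub>G\<^esub> transvection s t k y"
    using s t st by (auto simp: transvection_def mult_G)
qed

lemma transvection_inverse:
  assumes s: "s \<in> {1..n}" and t: "t \<in> {1..n}" and st: "s \<noteq> t" and g: "g \<in> carrier G"
  shows "transvection s t (- k) (transvection s t k g) = g"
proof -
  have "((g t + k * g s) mod M t + - k * g s) mod M t = (g t + k * g s + - k * g s) mod M t"
    by (rule mod_add_left_eq)
  also have "\<dots> = g t" using g t by (auto simp: carrier_G PiE_iff)
  finally have "((g t + k * g s) mod M t + - k * g s) mod M t = g t" .
  then show ?thesis
    using s t st g by (auto simp: transvection_def carrier_G PiE_iff extensional_def)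
qed

lemma transvection_iso:
  assumes s: "s \<in> {1..n}" and t: "t \<in> {1..n}" and st: "s \<noteq> t" and k: "M t dvd k * M s"
  shows "transvection s t k \<in> iso G G"
proof -
  have "transvection s t k (transvection s t (- k) g) = g" if "g \<in> carrier G" for g
    using transvection_inverse[OF s t st that, of "- k"] by simp
  then have "bij_betw (transvection s t k) (carrier G) (carrier G)"
    using transvection_inverse[OF s t st] transvection_carrier[OF t]
    by (intro bij_betw_byWitness[where f' = "transvection s t (- k)"]) auto
  then show ?thesis using transvection_hom[OF s t st k] by (simp add: iso_def)
qed

lemma transvection_not_characteristic:
  assumes s: "s \<in> {1..n}" and t: "t \<in> {1..n}" and st: "s \<noteq> t" and k: "M t dvd k * M s"
    and a: "\<forall>i\<in>{1..n}. a i \<le> lam i" and as: "1 \<le> a s"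
    and image: "(k * int p ^ (lam s - a s)) mod M t = int p ^ m" and m: "m < lam t - a t"
  shows "\<not> characteristic_subgroup (Rprod a) G"
proof
  assume "characteristic_subgroup (Rprod a) G"
  then have "transvection s t k ` Rprod a = Rprod a"
    using transvection_iso[OF s t st k] unfolding characteristic_subgroup_def by blast
  moreover have "lam s - a s < lam s" using a s as by fastforce
  then have "coord_vec s (int p ^ (lam s - a s)) \<in> Rprod a"
    using M_pos p_gt_1 by (auto simp: coord_vec_def Rprod_def Rfactor_def PiE_iff)
  ultimately have "transvection s t k (coord_vec s (int p ^ (lam s - a s))) \<in> Rprod a"
    by blast
  moreover have "transvection s t k (coord_vec s (int p ^ (lam s - a s))) t = int p ^ m"
    using s t st image by (simp add: transvection_def coord_vec_def)
  ultimately have "int p ^ (lam t - a t) dvd int p ^ m"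
    using t unfolding mem_Rprod_iff by metis
  with m show False by (simp add: p_power_dvd_iff)
qed

lemma not_canonical_imp_not_characteristic:
  assumes lam: "\<forall>i\<in>{2..n}. lam (i - 1) \<le> lam i"
    and a: "\<forall>i\<in>{1..n}. a i \<le> lam i"
    and "\<not> canonical n lam a"
  shows "\<not> characteristic_subgroup (Rprod a) G"
proof -
  consider (I) i where "i \<in> {2..n}" "a i < a (i - 1)"
    | (II) i where "i \<in> {1..<n}" "int (lam (i + 1)) - int (lam i) < int (a (i + 1)) - int (a i)"
    using assms(3) unfolding canonical_def by force
  then show ?thesis
  proof cases
    case I
    define s where "s = i - 1"
    have s: "s \<in> {1..n}" and t: "i \<in> {1..n}" and "s \<noteq> i" using I by (auto simp: s_def)
    have "lam s \<le> lam i" "a i < a s" "a s \<le> lam s" using lam I a s by (auto simp: s_def)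
    moreover define k where "k = int p ^ (lam i - lam s)"
    ultimately have "M i dvd k * M s"
      and "(k * int p ^ (lam s - a s)) mod M i = int p ^ (lam i - a s)"
      and "lam i - a s < lam i - a i" and "1 \<le> a s"
      using M_pos p_gt_1 by (auto simp: k_def p_power_dvd_iff power_strict_increasing_iff
          simp flip: power_add)
    then show ?thesis
      using transvection_not_characteristic[OF s t \<open>s \<noteq> i\<close> _ a] by blast
  next
    case II
    define s where "s = i + 1"
    have s: "s \<in> {1..n}" and t: "i \<in> {1..n}" and "s \<noteq> i" using II by (auto simp: s_def)
    have "s \<in> {2..n}" using II by (auto simp: s_def)
    then have "lam i \<le> lam s" using lam by (metis s_def add_diff_cancel_right')
    moreover have "a s \<le> lam s" "a i \<le> lam i" using a s t by auto
    ultimately have "M i dvd 1 * M s"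
      and "(1 * int p ^ (lam s - a s)) mod M i = int p ^ (lam s - a s)"
      and "lam s - a s < lam i - a i" and "1 \<le> a s"
      using II p_gt_1 by (auto simp: s_def p_power_dvd_iff power_strict_increasing_iff)
    then show ?thesis
      using transvection_not_characteristic[OF s t \<open>s \<noteq> i\<close> _ a] by blast
  qed
qed

end

theorem mainTheorem3:
  fixes p n :: nat and lam a :: "nat \<Rightarrow> nat"
  assumes "Factorial_Ring.prime p"
    and "\<forall>i\<in>{1..n}. 1 \<le> lam i"
    and "\<forall>i\<in>{2..n}. lam (i - 1) \<le> lam i"
    and "in_Lambda n lam a"
  shows "characteristic_subgroup (Rset p n lam a) (pgrp p n lam) \<longleftrightarrow> canonical n lam a"
proof -
  interpret prime_power_product p n lam
    using assms(1) by unfold_locales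
  have a: "\<forall>i\<in>{1..n}. a i \<le> lam i"
    using assms(4) by (simp add: in_Lambda_def)
  show ?thesis
    unfolding Rset_eq_Rprod[OF a]
    using canonical_imp_characteristic[OF _ a] not_canonical_imp_not_characteristic[OF assms(3) a]
    by blast
qed

end
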